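(* Let $G$ be a paratopological group with binary operation $\star$, let $\kappa$ be a regular uncountable cardinal, and let $T\subset G$ be a subspace of $G$ which is a stationary subset of $\kappa$ (that is, $T$ is identified with a stationary subset of $\kappa$, and the topology $T$ inherits from $G$ is the order topology of $T$ as a subspace of $\kappa$). Then one can choose a subset $S\subset T$ that is closed in $T$ and unbounded in $\kappa$, an ordinal $\lambda\in T$, and a set $L\subset [0,\lambda]_T=\{t\in T: t\le\lambda\}$ such that: (1) $\lambda\in L$; (2) $\lambda$ is a limit point of $L$; (3) the map $L\times S\to G$, $(x,y)\mapsto x\star y$, is injective.
   Context: All spaces are Tychonoff. A paratopological group is a group endowed with a topology for which the group multiplication $G\times G\to G$ is (jointly) continuous. Ordinals and their subsets carry the order topology and the subspace topology respectively. A subset of a regular uncountable cardinal $\kappa$ is stationary if it meets every closed unbounded subset of $\kappa$. *)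

theory Defs
  imports "HOL-Analysis.Analysis" "HOL-Algebra.Group" "HOL-Library.Equipollence"
begin

definition paratopological_group :: "('a, 'b) monoid_scheme \<Rightarrow> 'a topology \<Rightarrow> bool" where
  "paratopological_group G X \<longleftrightarrow> group G \<and> topspace X = carrier G \<and>
     continuous_map (prod_topology X X) X (\<lambda>(x, y). x \<otimes>\<^bsub>G\<^esub> y)"

definition tychonoff_space :: "'a topology \<Rightarrow> bool" where
  "tychonoff_space X \<longleftrightarrow> t1_space X \<and> completely_regular_space X"

definition ord_top :: "('k::linorder) topology" where
  "ord_top = topology_generated_by (range lessThan \<union> range greaterThan)"

text \<open>The well-ordered type 'k, with its order, represents a regular uncountable
  cardinal \<kappa> (its elements are the ordinals below \<kappa>).\<close>
definition regular_uncountable_cardinal_type :: "('k::wellorder) itself \<Rightarrow> bool" where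
  "regular_uncountable_cardinal_type _ \<longleftrightarrow>
     uncountable (UNIV :: 'k set) \<and>
     (\<forall>a::'k. {..<a} \<prec> (UNIV :: 'k set)) \<and>
     (\<forall>A::'k set. (\<forall>a. \<exists>b\<in>A. a \<le> b) \<longrightarrow> A \<approx> (UNIV :: 'k set))"

definition unbounded :: "('k::linorder) set \<Rightarrow> bool" where
  "unbounded A \<longleftrightarrow> (\<forall>a. \<exists>b\<in>A. a \<le> b)"

definition club :: "('k::linorder) set \<Rightarrow> bool" where
  "club C \<longleftrightarrow> closedin ord_top C \<and> unbounded C"

definition stationary :: "('k::linorder) set \<Rightarrow> bool" where
  "stationary T \<longleftrightarrow> (\<forall>C. club C \<longrightarrow> T \<inter> C \<noteq> {})"

end

theory Submission
  imports Defs
begin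

text \<open>Take for \<lambda> any element of T that is a limit of T (the limits of T form a club, which
  meets T) and L = T \<inter> [0,\<lambda>]. For fixed z, left cancellation shows that the equation
  x \<star> z = x' \<star> y with x, x' \<in> L has at most |L \<times> L| < \<kappa> solutions y \<in> T. By regularity of \<kappa>
  the ordinals \<alpha> such that every solution for every z < \<alpha> lies below \<alpha> form a club C, and
  S = T \<inter> C works: if x \<star> y = x' \<star> y' with y < y' in S, then y' is a solution for z = y,
  so y' < y'.\<close>

lemma openin_ord_top_lessThan: "openin ord_top {..<b::'k::linorder}"
  unfolding ord_top_def by (rule topology_generated_by_Basis) auto

lemma openin_ord_top_greaterThan: "openin ord_top {a::'k::linorder<..}"
  unfolding ord_top_def by (rule topology_generated_by_Basis) auto

lemma topspace_ord_top:
  assumes "\<And>x::'k::linorder. \<exists>w. x < w"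
  shows "topspace (ord_top :: 'k topology) = UNIV"
  unfolding ord_top_def topology_generated_by_topspace using assms by blast

lemma atMost_eq_lessThan_Least:
  assumes "(x::'k::wellorder) < w"
  shows "{..x} = {..<LEAST w. x < w}"
proof -
  have "x < (LEAST w. x < w)" using assms by (rule LeastI)
  moreover have "y \<le> x" if "y < (LEAST w. x < w)" for y
    using that not_less_Least not_le by blast
  ultimately show ?thesis by (auto intro: le_less_trans)
qed

lemma openin_ord_top_atMost: "(x::'k::wellorder) < w \<Longrightarrow> openin ord_top {..x}"
  by (simp add: atMost_eq_lessThan_Least openin_ord_top_lessThan)

lemma openin_ord_top_greaterThanAtMost: "(x::'k::wellorder) < w \<Longrightarrow> openin ord_top {a<..x}"
proof -
  assume "x < w"
  have "{a<..x} = {a<..} \<inter> {..x}" by auto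
  then show ?thesis
    using openin_Int[OF openin_ord_top_greaterThan openin_ord_top_atMost[OF \<open>x < w\<close>]] by simp
qed

lemma closedin_ord_topI:
  assumes "\<And>x::'k::linorder. \<exists>w. x < w"
    and "\<And>x. x \<notin> C \<Longrightarrow> \<exists>U. openin ord_top U \<and> x \<in> U \<and> U \<inter> C = {}"
  shows "closedin ord_top (C::'k set)"
proof -
  have "\<exists>U. openin ord_top U \<and> x \<in> U \<and> U \<subseteq> - C" if "x \<in> - C" for x
    using assms(2)[of x] that by blast
  then have "openin ord_top (- C)"
    by (subst openin_subopen) blast
  then show ?thesis
    unfolding closedin_def topspace_ord_top[OF assms(1)] Compl_eq_Diff_UNIV by simp
qed

lemma openin_ord_top_left_nbhd:
  assumes "openin ord_top U" "lam \<in> U" "a0 < (lam::'k::linorder)"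
  shows "\<exists>a<lam. {a<..lam} \<subseteq> U"
proof -
  have "generate_topology_on (range lessThan \<union> range greaterThan) U"
    using assms(1) unfolding ord_top_def openin_topology_generated_by_iff .
  then show ?thesis using assms(2)
  proof (induction rule: generate_topology_on.induct)
    case (Int A B)
    then obtain a1 a2 where "a1 < lam" "{a1<..lam} \<subseteq> A" "a2 < lam" "{a2<..lam} \<subseteq> B" by auto
    then show ?case by (intro exI[of _ "max a1 a2"]) auto
  next
    case (UN K)
    then obtain k where "k \<in> K" "lam \<in> k" by auto
    with UN show ?case by blast
  next
    case (Basis s)
    then consider b where "s = {..<b}" | b where "s = {b<..}" by blast
    then show ?case
    proof cases
      case (1 b)
      then show ?thesis using Basis assms(3) by (auto intro!: exI[of _ a0])
    next
      case (2 b)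
      then show ?thesis using Basis by (auto intro!: exI[of _ b])
    qed
  qed auto
qed

lemma in_derived_set_of_ord_topI:
  assumes "a0 < (lam::'k::linorder)" and "\<And>a. a < lam \<Longrightarrow> \<exists>y\<in>A. a < y \<and> y < lam"
  shows "lam \<in> ord_top derived_set_of A"
  unfolding derived_set_of_def
proof (intro CollectI conjI allI impI)
  show "lam \<in> topspace ord_top"
    using assms(1) openin_ord_top_greaterThan[of a0] openin_subset by fastforce
  fix U assume "lam \<in> U \<and> openin ord_top U"
  then obtain a where "a < lam" "{a<..lam} \<subseteq> U"
    using openin_ord_top_left_nbhd assms(1) by blast
  with assms(2) show "\<exists>y. y \<noteq> lam \<and> y \<in> A \<and> y \<in> U" by fastforce
qed

lemma embedding_map_imp_injective: "embedding_map X Y f \<Longrightarrow> inj_on f (topspace X)"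
  unfolding embedding_map_def using homeomorphic_imp_injective_map by blast

lemma embedding_map_imp_continuous_map: "embedding_map X Y f \<Longrightarrow> continuous_map X Y f"
  unfolding embedding_map_def
  using homeomorphic_imp_continuous_map continuous_map_in_subtopology by blast

lemma group_left_cancel:
  "\<lbrakk>group G; a \<in> carrier G; b \<in> carrier G; c \<in> carrier G; a \<otimes>\<^bsub>G\<^esub> b = a \<otimes>\<^bsub>G\<^esub> c\<rbrakk> \<Longrightarrow> b = c"
  by (metis group.Units_eq group.is_monoid monoid.Units_l_cancel)

lemma product_equation_solutions_lepoll:
  assumes "group G" "inj_on e T" "e ` T \<subseteq> carrier G" "L \<subseteq> T"
  shows "{y \<in> T. \<exists>x\<in>L. \<exists>x'\<in>L. e x \<otimes>\<^bsub>G\<^esub> c = e x' \<otimes>\<^bsub>G\<^esub> e y} \<lesssim> L \<times> L"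
    (is "?N \<lesssim> _")
proof -
  define g where "g y = (SOME p. p \<in> L \<times> L \<and> e (fst p) \<otimes>\<^bsub>G\<^esub> c = e (snd p) \<otimes>\<^bsub>G\<^esub> e y)" for y
  have g: "g y \<in> L \<times> L \<and> e (fst (g y)) \<otimes>\<^bsub>G\<^esub> c = e (snd (g y)) \<otimes>\<^bsub>G\<^esub> e y" if y: "y \<in> ?N" for y
  proof -
    obtain x x' where "x \<in> L" "x' \<in> L" "e x \<otimes>\<^bsub>G\<^esub> c = e x' \<otimes>\<^bsub>G\<^esub> e y" using y by blast
    then have "\<exists>p. p \<in> L \<times> L \<and> e (fst p) \<otimes>\<^bsub>G\<^esub> c = e (snd p) \<otimes>\<^bsub>G\<^esub> e y"
      by (intro exI[of _ "(x, x')"]) simp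
    then show ?thesis unfolding g_def by (rule someI_ex)
  qed
  have "inj_on g ?N"
  proof (rule inj_onI)
    fix y1 y2 assume y: "y1 \<in> ?N" "y2 \<in> ?N" "g y1 = g y2"
    have "e (snd (g y1)) \<otimes>\<^bsub>G\<^esub> e y1 = e (fst (g y1)) \<otimes>\<^bsub>G\<^esub> c"
      using g[OF y(1)] by simp
    also have "\<dots> = e (snd (g y1)) \<otimes>\<^bsub>G\<^esub> e y2"
      using g[OF y(2)] y(3) by simp
    finally have "e (snd (g y1)) \<otimes>\<^bsub>G\<^esub> e y1 = e (snd (g y1)) \<otimes>\<^bsub>G\<^esub> e y2" .
    moreover have "snd (g y1) \<in> T" using g[OF y(1)] assms(4) by auto
    ultimately have "e y1 = e y2"
      using group_left_cancel[OF assms(1)] assms(3) y by blast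
    then show "y1 = y2" using assms(2) y by (auto dest: inj_onD)
  qed
  moreover have "g ` ?N \<subseteq> L \<times> L" using g by blast
  ultimately show ?thesis unfolding lepoll_def by blast
qed

context
  assumes regular: "regular_uncountable_cardinal_type TYPE('k::wellorder)"
begin

lemma gt_ex_regular: "\<exists>w. (x::'k) < w"
proof (rule ccontr)
  assume "\<nexists>w. x < w"
  then have UNIV_eq: "UNIV = insert x {..<x}" using le_neq_trans by (auto simp: not_less)
  moreover have "infinite {..<x}"
    using regular UNIV_eq countable_finite unfolding regular_uncountable_cardinal_type_def
    by (metis finite_insert)
  ultimately have "(UNIV::'k set) \<approx> {..<x}" using infinite_insert_eqpoll by metis
  with regular show False
    unfolding regular_uncountable_cardinal_type_def
    by (meson eq_lesspoll_trans lesspoll_def eqpoll_refl)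
qed

lemma bounded_if_lesspoll_UNIV:
  assumes "(A::'k set) \<prec> (UNIV::'k set)"
  shows "\<exists>u. \<forall>y\<in>A. y < u"
proof (rule ccontr)
  assume "\<not> ?thesis"
  then have "A \<approx> (UNIV::'k set)"
    using regular unfolding regular_uncountable_cardinal_type_def by (auto simp: not_less)
  with assms show False by (simp add: lesspoll_def)
qed

lemma countable_lesspoll_UNIV: "countable (A::'k set) \<Longrightarrow> A \<prec> (UNIV::'k set)"
  using regular unfolding regular_uncountable_cardinal_type_def
  by (meson countable_eqpoll eqpoll_sym lesspoll_def subset_imp_lepoll subset_UNIV)

lemma atMost_Times_atMost_lesspoll_UNIV: "{..u::'k} \<times> {..u} \<prec> (UNIV::'k set)"
proof (cases "finite {..u}")
  case True
  then show ?thesis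
    using regular countable_finite finite_lesspoll_infinite
    unfolding regular_uncountable_cardinal_type_def by (metis finite_SigmaI)
next
  case False
  have atMost_eq: "{..u} = insert u {..<u}" by auto
  with False have "infinite {..<u}" by simp
  have "{..u} \<times> {..u} \<approx> {..u}"
    using card_of_Times_same_infinite[OF False] by (simp add: eqpoll_iff_card_of_ordIso)
  also have "{..u} \<approx> {..<u}"
    using infinite_insert_eqpoll[OF \<open>infinite {..<u}\<close>] atMost_eq by simp
  finally show ?thesis
    using regular unfolding regular_uncountable_cardinal_type_def by (meson eq_lesspoll_trans)
qed

lemma lub_of_seq: "\<exists>\<alpha>. (\<forall>n. (f::nat \<Rightarrow> 'k) n \<le> \<alpha>) \<and> (\<forall>c<\<alpha>. \<exists>n. c < f n)"
proof -
  obtain u where "\<forall>n. f n < u"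
    using bounded_if_lesspoll_UNIV[OF countable_lesspoll_UNIV[of "range f"]] by auto
  define \<alpha> where "\<alpha> = (LEAST a. \<forall>n. f n \<le> a)"
  have "\<forall>n. f n \<le> \<alpha>"
    unfolding \<alpha>_def by (rule LeastI[of _ u]) (use \<open>\<forall>n. f n < u\<close> less_imp_le in blast)
  moreover have "\<exists>n. c < f n" if "c < \<alpha>" for c
    using that not_less_Least[of c "\<lambda>a. \<forall>n. f n \<le> a"] unfolding \<alpha>_def by (auto simp: not_le)
  ultimately show ?thesis by blast
qed

text \<open>Iterate \<omega> times a map F with F \<beta> \<ge> \<beta> and F \<beta> > g ` [0,\<beta>) (it exists by regularity)
  and take the supremum.\<close>

lemma unbounded_closure_points: "unbounded {\<alpha>::'k. \<forall>z<\<alpha>. g z < \<alpha>}"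
proof -
  have "\<exists>u. \<beta> \<le> u \<and> (\<forall>z<\<beta>. g z < u)" for \<beta>
  proof -
    have "g ` {..<\<beta>} \<prec> (UNIV::'k set)"
      using regular image_lepoll lesspoll_trans1 unfolding regular_uncountable_cardinal_type_def by blast
    then obtain u where "\<forall>y\<in>g ` {..<\<beta>}. y < u" using bounded_if_lesspoll_UNIV by blast
    then show ?thesis by (intro exI[of _ "max \<beta> u"]) (auto simp: less_max_iff_disj)
  qed
  then obtain F where F: "\<And>\<beta>. \<beta> \<le> F \<beta>" "\<And>\<beta> z. z < \<beta> \<Longrightarrow> g z < F \<beta>"
    by metis
  show ?thesis
    unfolding unbounded_def
  proof
    fix a
    obtain \<alpha> where ub: "\<forall>n. (F ^^ n) a \<le> \<alpha>" and lub: "\<forall>c<\<alpha>. \<exists>n. c < (F ^^ n) a"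
      using lub_of_seq[of "\<lambda>n. (F ^^ n) a"] by blast
    have "g z < \<alpha>" if "z < \<alpha>" for z
    proof -
      obtain n where "z < (F ^^ n) a" using lub \<open>z < \<alpha>\<close> by blast
      then have "g z < (F ^^ Suc n) a" using F(2) by simp
      also have "\<dots> \<le> \<alpha>" using ub by blast
      finally show ?thesis .
    qed
    moreover have "a \<le> \<alpha>" using ub[rule_format, of 0] by simp
    ultimately show "\<exists>\<alpha>\<in>{\<alpha>. \<forall>z<\<alpha>. g z < \<alpha>}. a \<le> \<alpha>" by blast
  qed
qed

lemma closedin_ord_top_atLeast: "closedin ord_top {a::'k..}"
  by (rule closedin_ord_topI[OF gt_ex_regular])
    (auto intro!: exI[of _ "{..<a}"] simp: openin_ord_top_lessThan)

lemma club_Int_atLeast: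
  assumes "club C"
  shows "club (C \<inter> {a::'k..})"
  unfolding club_def
proof
  show "closedin ord_top (C \<inter> {a..})"
    using assms closedin_ord_top_atLeast unfolding club_def by (simp add: closedin_Int)
  show "unbounded (C \<inter> {a..})"
    unfolding unbounded_def
  proof
    fix b
    obtain c where "c \<in> C" "max a b \<le> c" using assms unfolding club_def unbounded_def by blast
    then show "\<exists>c\<in>C \<inter> {a..}. b \<le> c" by auto
  qed
qed

lemma stationary_Int_club_unbounded:
  assumes "stationary T" "club C"
  shows "unbounded (T \<inter> (C::'k set))"
  unfolding unbounded_def
proof
  fix a
  have "T \<inter> (C \<inter> {a..}) \<noteq> {}"
    using assms club_Int_atLeast unfolding stationary_def by blast
  then show "\<exists>b\<in>T \<inter> C. a \<le> b" by auto
qed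

lemma stationary_imp_unbounded: "stationary (T::'k set) \<Longrightarrow> unbounded T"
proof -
  have "club (UNIV::'k set)"
    unfolding club_def unbounded_def
    using closedin_topspace[of "ord_top::'k topology"] topspace_ord_top[OF gt_ex_regular] by auto
  then show "stationary T \<Longrightarrow> unbounded T" using stationary_Int_club_unbounded by fastforce
qed

lemma club_limit_points:
  assumes "unbounded T"
  shows "club {\<alpha>::'k. (\<exists>a. a < \<alpha>) \<and> (\<forall>a<\<alpha>. \<exists>y\<in>T. a < y \<and> y < \<alpha>)}"
proof -
  define D where "D = {\<alpha>::'k. (\<exists>a. a < \<alpha>) \<and> (\<forall>a<\<alpha>. \<exists>y\<in>T. a < y \<and> y < \<alpha>)}"
  have "\<exists>y\<in>T. x < y" for x
  proof -
    obtain w where "x < w" using gt_ex_regular by blast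
    moreover obtain y where "y \<in> T" "w \<le> y" using assms unfolding unbounded_def by blast
    ultimately show ?thesis by (meson less_le_trans)
  qed
  then obtain nxt where nxt: "\<And>x. nxt x \<in> T" "\<And>x. x < nxt x" by metis
  have "unbounded D"
    unfolding unbounded_def
  proof
    fix a
    obtain \<alpha> where \<alpha>: "\<forall>z<\<alpha>. nxt z < \<alpha>" "nxt a \<le> \<alpha>"
      using unbounded_closure_points[of nxt] unfolding unbounded_def by blast
    have "a < \<alpha>" using nxt(2) \<alpha>(2) by (rule less_le_trans)
    moreover have "\<forall>c<\<alpha>. \<exists>y\<in>T. c < y \<and> y < \<alpha>" using \<alpha>(1) nxt by blast
    ultimately show "\<exists>\<alpha>\<in>D. a \<le> \<alpha>" unfolding D_def by auto
  qed
  moreover have "closedin ord_top D"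
  proof (rule closedin_ord_topI[OF gt_ex_regular])
    fix x assume "x \<notin> D"
    obtain w where "x < w" using gt_ex_regular by blast
    show "\<exists>U. openin ord_top U \<and> x \<in> U \<and> U \<inter> D = {}"
    proof (cases "\<exists>a. a < x")
      case False
      then have "c \<notin> D" if "c \<le> x" for c
        using that less_le_trans unfolding D_def by blast
      then have "{..x} \<inter> D = {}" by auto
      with openin_ord_top_atMost[OF \<open>x < w\<close>] show ?thesis
        by (intro exI[of _ "{..x}"]) auto
    next
      case True
      then obtain a where "a < x" and gap: "\<not> (\<exists>y\<in>T. a < y \<and> y < x)"
        using \<open>x \<notin> D\<close> unfolding D_def by blast
      have "c \<notin> D" if "a < c" "c \<le> x" for c
        using that gap less_le_trans unfolding D_def by blast
      then have "{a<..x} \<inter> D = {}" by auto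
      with \<open>a < x\<close> openin_ord_top_greaterThanAtMost[OF \<open>x < w\<close>, of a] show ?thesis
        by (intro exI[of _ "{a<..x}"]) auto
    qed
  qed
  ultimately show ?thesis unfolding club_def D_def by blast
qed

lemma stationary_has_limit_point:
  assumes "stationary T"
  shows "\<exists>lam\<in>T. lam \<in> ord_top derived_set_of {t \<in> T. t \<le> (lam::'k)}"
proof -
  obtain lam a0 where "lam \<in> T" "a0 < lam" and dense: "\<forall>a<lam. \<exists>y\<in>T. a < y \<and> y < lam"
    using club_limit_points[OF stationary_imp_unbounded[OF assms]] assms
    unfolding stationary_def by blast
  have "lam \<in> ord_top derived_set_of {t \<in> T. t \<le> lam}"
    using \<open>a0 < lam\<close> by (rule in_derived_set_of_ord_topI) (use dense in fastforce)
  with \<open>lam \<in> T\<close> show ?thesis by blast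
qed

lemma club_closure_points_of_small:
  assumes "\<And>z. N z \<prec> (UNIV::'k set)"
  shows "club {\<alpha>::'k. \<forall>z<\<alpha>. \<forall>y\<in>N z. y < \<alpha>}"
proof -
  define C where "C = {\<alpha>::'k. \<forall>z<\<alpha>. \<forall>y\<in>N z. y < \<alpha>}"
  define b where "b z = (SOME u. \<forall>y\<in>N z. y < u)" for z
  have b: "y < b z" if "y \<in> N z" for y z
    using someI_ex[OF bounded_if_lesspoll_UNIV[OF assms[of z]]] that unfolding b_def by blast
  have "\<alpha> \<in> C" if closed_b: "\<forall>z<\<alpha>. b z < \<alpha>" for \<alpha>
  proof -
    have "y < \<alpha>" if "z < \<alpha>" "y \<in> N z" for z y
      using b[OF \<open>y \<in> N z\<close>] closed_b \<open>z < \<alpha>\<close> by (meson less_trans)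
    then show ?thesis unfolding C_def by blast
  qed
  then have "{\<alpha>. \<forall>z<\<alpha>. b z < \<alpha>} \<subseteq> C" by blast
  then have "unbounded C"
    using unbounded_closure_points[of b] unfolding unbounded_def by blast
  moreover have "closedin ord_top C"
  proof (rule closedin_ord_topI[OF gt_ex_regular])
    fix x assume "x \<notin> C"
    then obtain z y where "z < x" "y \<in> N z" "x \<le> y" unfolding C_def by (auto simp: not_less)
    obtain w where "y < w" using gt_ex_regular by blast
    have "c \<notin> C" if "z < c" "c \<le> y" for c
      using that \<open>y \<in> N z\<close> leD unfolding C_def by blast
    then have "{z<..y} \<inter> C = {}" by auto
    with \<open>z < x\<close> \<open>x \<le> y\<close> openin_ord_top_greaterThanAtMost[OF \<open>y < w\<close>, of z]
    show "\<exists>U. openin ord_top U \<and> x \<in> U \<and> U \<inter> C = {}"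
      by (intro exI[of _ "{z<..y}"]) auto
  qed
  ultimately show ?thesis unfolding club_def C_def by blast
qed

lemma club_with_injective_products:
  assumes "group G" "inj_on e T" "e ` T \<subseteq> carrier G" "stationary T" "L \<subseteq> T" "L \<subseteq> {..u::'k}"
  shows "\<exists>S\<subseteq>T. closedin (subtopology ord_top T) S \<and> unbounded S \<and>
           inj_on (\<lambda>(x, y). e x \<otimes>\<^bsub>G\<^esub> e y) (L \<times> S)"
proof -
  define N where "N z = {y \<in> T. \<exists>x\<in>L. \<exists>x'\<in>L. e x \<otimes>\<^bsub>G\<^esub> e z = e x' \<otimes>\<^bsub>G\<^esub> e y}" for z
  have "N z \<prec> (UNIV::'k set)" for z
  proof -
    have "N z \<lesssim> L \<times> L"
      unfolding N_def by (rule product_equation_solutions_lepoll[OF assms(1-3,5)])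
    also have "L \<times> L \<lesssim> {..u} \<times> {..u}" by (rule subset_imp_lepoll) (use assms(6) in blast)
    finally show ?thesis using atMost_Times_atMost_lesspoll_UNIV by (rule lesspoll_trans1)
  qed
  then have "club {\<alpha>. \<forall>z<\<alpha>. \<forall>y\<in>N z. y < \<alpha>}" (is "club ?C")
    by (rule club_closure_points_of_small)
  have "x = x' \<and> y = y'"
    if xy: "x \<in> L" "y \<in> T" "y \<in> ?C" "x' \<in> L" "y' \<in> T" "y' \<in> ?C"
      and eq: "e x \<otimes>\<^bsub>G\<^esub> e y = e x' \<otimes>\<^bsub>G\<^esub> e y'" for x y x' y'
  proof -
    have "y' \<in> N y" "y \<in> N y'"
      unfolding N_def using xy eq eq[symmetric] by blast+
    then have "\<not> y < y'" "\<not> y' < y" using xy(3,6) by blast+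
    then have "y = y'" by simp
    have carrier: "e x \<in> carrier G" "e x' \<in> carrier G" "e y \<in> carrier G"
      using xy assms(3,5) by blast+
    have "e x = e x'"
      using eq \<open>y = y'\<close> group.right_cancel[OF assms(1) carrier(3) carrier(1) carrier(2)] by simp
    then have "x = x'" using xy assms(2,5) by (auto dest: inj_onD)
    with \<open>y = y'\<close> show "x = x' \<and> y = y'" by simp
  qed
  then have "inj_on (\<lambda>(x, y). e x \<otimes>\<^bsub>G\<^esub> e y) (L \<times> (T \<inter> ?C))"
    by (intro inj_onI) auto
  moreover have "closedin (subtopology ord_top T) (T \<inter> ?C)"
    using \<open>club ?C\<close> unfolding club_def by (simp add: closedin_subtopology_Int_closed)
  moreover have "unbounded (T \<inter> ?C)"
    using assms(4) \<open>club ?C\<close> by (rule stationary_Int_club_unbounded)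
  ultimately show ?thesis by blast
qed

end

theorem lemma2p2:
  fixes G :: "('a, 'b) monoid_scheme" and X :: "'a topology"
    and T :: "('k::wellorder) set" and e :: "'k \<Rightarrow> 'a"
  assumes "paratopological_group G X"
    and "tychonoff_space X"
    and "regular_uncountable_cardinal_type TYPE('k)"
    and "stationary T"
    and "embedding_map (subtopology ord_top T) X e"
  shows "\<exists>S lam L. S \<subseteq> T \<and> closedin (subtopology ord_top T) S \<and> unbounded S \<and>
           lam \<in> T \<and> L \<subseteq> {t \<in> T. t \<le> lam} \<and>
           lam \<in> L \<and> lam \<in> ord_top derived_set_of L \<and>
           inj_on (\<lambda>(x, y). e x \<otimes>\<^bsub>G\<^esub> e y) (L \<times> S)"
proof -
  have "group G" and "topspace X = carrier G"
    using assms(1) unfolding paratopological_group_def by auto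
  have topspace_T: "topspace (subtopology ord_top T) = T"
    by (simp add: topspace_ord_top[OF gt_ex_regular[OF assms(3)]])
  have "inj_on e T"
    using embedding_map_imp_injective[OF assms(5)] unfolding topspace_T .
  have "e ` T \<subseteq> carrier G"
    using continuous_map_image_subset_topspace[OF embedding_map_imp_continuous_map[OF assms(5)]]
    unfolding topspace_T \<open>topspace X = carrier G\<close> .
  obtain lam where "lam \<in> T" and lam_limit: "lam \<in> ord_top derived_set_of {t \<in> T. t \<le> lam}"
    using stationary_has_limit_point[OF assms(3,4)] by blast
  obtain S where "S \<subseteq> T" "closedin (subtopology ord_top T) S" "unbounded S"
      "inj_on (\<lambda>(x, y). e x \<otimes>\<^bsub>G\<^esub> e y) ({t \<in> T. t \<le> lam} \<times> S)"
    using club_with_injective_products[OF assms(3) \<open>group G\<close> \<open>inj_on e T\<close> \<open>e ` T \<subseteq> carrier G\<close>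
        assms(4), of "{t \<in> T. t \<le> lam}" lam] by auto
  with \<open>lam \<in> T\<close> lam_limit show ?thesis by blast
qed

end
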